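(* Let $A_1,A_2$ be unital, properly infinite $C^*$-algebras, let $B$ be a $C^*$-algebra and let $\pi_1\colon A_1\to B$, $\pi_2\colon A_2\to B$ be surjective $*$-homomorphisms. Let $A=\{(a_1,a_2)\in A_1\oplus A_2:\pi_1(a_1)=\pi_2(a_2)\}$ be the pull-back. Then $M_2(A)$ is properly infinite. Moreover, if $B$ is $K_1$-injective, then $A$ itself is properly infinite.
   Context: A unital $C^*$-algebra is properly infinite if its unit is a properly infinite projection, i.e. there are mutually orthogonal projections $e,f\le 1$ with $e\sim 1\sim f$ (Murray–von Neumann equivalence). A unital $C^*$-algebra $B$ is $K_1$-injective if the natural map $\mathcal U(B)/\mathcal U^0(B)\to K_1(B)$ is injective, where $\mathcal U(B)$ is the unitary group and $\mathcal U^0(B)$ its connected component containing $1$. *)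

theory Defs
  imports "HOL-Analysis.Analysis"
begin

text \<open>The real Banach algebra structure is
inherited from the library classes; the complex scalar multiplication extends it.\<close>

class cstar_algebra = real_normed_algebra + banach +
  fixes scaleC :: "complex \<Rightarrow> 'a \<Rightarrow> 'a"
    and cadj :: "'a \<Rightarrow> 'a"
  assumes scaleC_add_right: "scaleC c (x + y) = scaleC c x + scaleC c y"
    and scaleC_add_left: "scaleC (c + d) x = scaleC c x + scaleC d x"
    and scaleC_scaleC: "scaleC c (scaleC d x) = scaleC (c * d) x"
    and scaleC_one: "scaleC 1 x = x"
    and scaleR_scaleC: "scaleR r x = scaleC (complex_of_real r) x"
    and scaleC_mult_left: "scaleC c x * y = scaleC c (x * y)"
    and scaleC_mult_right: "x * scaleC c y = scaleC c (x * y)"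
    and norm_scaleC: "norm (scaleC c x) = cmod c * norm x"
    and cadj_cadj: "cadj (cadj x) = x"
    and cadj_add: "cadj (x + y) = cadj x + cadj y"
    and cadj_scaleC: "cadj (scaleC c x) = scaleC (cnj c) (cadj x)"
    and cadj_mult: "cadj (x * y) = cadj y * cadj x"
    and cstar_identity: "norm (cadj x * x) = norm x * norm x"

text \<open>Unital C*-algebras (the zero algebra, where 1 = 0, is not excluded).\<close>
class unital_cstar_algebra = cstar_algebra + monoid_mult

definition star_hom :: "('a::cstar_algebra \<Rightarrow> 'b::cstar_algebra) \<Rightarrow> bool" where
  "star_hom \<pi> \<longleftrightarrow>
     (\<forall>x y. \<pi> (x + y) = \<pi> x + \<pi> y) \<and>
     (\<forall>c x. \<pi> (scaleC c x) = scaleC c (\<pi> x)) \<and>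
     (\<forall>x y. \<pi> (x * y) = \<pi> x * \<pi> y) \<and>
     (\<forall>x. \<pi> (cadj x) = cadj (\<pi> x))"

text \<open>Stated for a unital *-algebra given explicitly by a carrier S, multiplication m,
adjoint ad, zero z and unit u (so that it applies to subalgebras such as the pull-back
and to matrix algebras over them).\<close>

definition is_proj :: "('a \<Rightarrow> 'a \<Rightarrow> 'a) \<Rightarrow> ('a \<Rightarrow> 'a) \<Rightarrow> 'a \<Rightarrow> bool" where
  "is_proj m ad p \<longleftrightarrow> m p p = p \<and> ad p = p"

definition mvn_equiv :: "'a set \<Rightarrow> ('a \<Rightarrow> 'a \<Rightarrow> 'a) \<Rightarrow> ('a \<Rightarrow> 'a) \<Rightarrow> 'a \<Rightarrow> 'a \<Rightarrow> bool" where
  "mvn_equiv S m ad p q \<longleftrightarrow> (\<exists>v\<in>S. m (ad v) v = p \<and> m v (ad v) = q)"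

text \<open>Properly infinite unit: mutually orthogonal projections e, f \<le> 1 with e ~ 1 ~ f.
(Every projection is \<le> 1; orthogonality e f = 0 implies f e = 0 by taking adjoints.)\<close>
definition properly_infinite ::
  "'a set \<Rightarrow> ('a \<Rightarrow> 'a \<Rightarrow> 'a) \<Rightarrow> ('a \<Rightarrow> 'a) \<Rightarrow> 'a \<Rightarrow> 'a \<Rightarrow> bool" where
  "properly_infinite S m ad z u \<longleftrightarrow>
     (\<exists>e\<in>S. \<exists>f\<in>S. is_proj m ad e \<and> is_proj m ad f \<and> m e f = z \<and>
        mvn_equiv S m ad e u \<and> mvn_equiv S m ad f u)"

definition pullback :: "('a \<Rightarrow> 'c) \<Rightarrow> ('b \<Rightarrow> 'c) \<Rightarrow> ('a \<times> 'b) set" where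
  "pullback \<pi>1 \<pi>2 = {(a1, a2). \<pi>1 a1 = \<pi>2 a2}"

definition pmult :: "('a::times \<times> 'b::times) \<Rightarrow> ('a \<times> 'b) \<Rightarrow> ('a \<times> 'b)" where
  "pmult x y = (fst x * fst y, snd x * snd y)"

definition padd :: "('a::plus \<times> 'b::plus) \<Rightarrow> ('a \<times> 'b) \<Rightarrow> ('a \<times> 'b)" where
  "padd x y = (fst x + fst y, snd x + snd y)"

definition padj :: "('a::cstar_algebra \<times> 'b::cstar_algebra) \<Rightarrow> ('a \<times> 'b)" where
  "padj x = (cadj (fst x), cadj (snd x))"

text \<open>2x2 matrices over an algebra (ops p, m, ad, z, u), entries indexed by bool.\<close>

definition mat2_carrier :: "'a set \<Rightarrow> (bool \<Rightarrow> bool \<Rightarrow> 'a) set" where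
  "mat2_carrier S = {M. \<forall>i j. M i j \<in> S}"

definition mat2_mult :: "('a \<Rightarrow> 'a \<Rightarrow> 'a) \<Rightarrow> ('a \<Rightarrow> 'a \<Rightarrow> 'a) \<Rightarrow>
    (bool \<Rightarrow> bool \<Rightarrow> 'a) \<Rightarrow> (bool \<Rightarrow> bool \<Rightarrow> 'a) \<Rightarrow> (bool \<Rightarrow> bool \<Rightarrow> 'a)" where
  "mat2_mult p m M N = (\<lambda>i j. p (m (M i False) (N False j)) (m (M i True) (N True j)))"

definition mat2_adj :: "('a \<Rightarrow> 'a) \<Rightarrow> (bool \<Rightarrow> bool \<Rightarrow> 'a) \<Rightarrow> (bool \<Rightarrow> bool \<Rightarrow> 'a)" where
  "mat2_adj ad M = (\<lambda>i j. ad (M j i))"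

definition mat2_const :: "'a \<Rightarrow> (bool \<Rightarrow> bool \<Rightarrow> 'a)" where
  "mat2_const z = (\<lambda>i j. z)"

definition mat2_one :: "'a \<Rightarrow> 'a \<Rightarrow> (bool \<Rightarrow> bool \<Rightarrow> 'a)" where
  "mat2_one z u = (\<lambda>i j. if i = j then u else z)"

definition is_unit_elem :: "'a::times \<Rightarrow> bool" where
  "is_unit_elem e \<longleftrightarrow> (\<forall>x. e * x = x \<and> x * e = x)"

text \<open>n x n matrices over B (unit e) as functions nat => nat => B; only entries i,j < n matter.\<close>

definition matn_mult :: "nat \<Rightarrow> (nat \<Rightarrow> nat \<Rightarrow> 'a::cstar_algebra) \<Rightarrow> (nat \<Rightarrow> nat \<Rightarrow> 'a) \<Rightarrow> (nat \<Rightarrow> nat \<Rightarrow> 'a)" where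
  "matn_mult n M N = (\<lambda>i j. \<Sum>k<n. M i k * N k j)"

definition matn_adj :: "(nat \<Rightarrow> nat \<Rightarrow> 'a::cstar_algebra) \<Rightarrow> (nat \<Rightarrow> nat \<Rightarrow> 'a)" where
  "matn_adj M = (\<lambda>i j. cadj (M j i))"

definition matn_id :: "'a::cstar_algebra \<Rightarrow> (nat \<Rightarrow> nat \<Rightarrow> 'a)" where
  "matn_id e = (\<lambda>i j. if i = j then e else 0)"

definition matn_eq :: "nat \<Rightarrow> (nat \<Rightarrow> nat \<Rightarrow> 'a) \<Rightarrow> (nat \<Rightarrow> nat \<Rightarrow> 'a) \<Rightarrow> bool" where
  "matn_eq n M N \<longleftrightarrow> (\<forall>i<n. \<forall>j<n. M i j = N i j)"

definition matn_unitary :: "'a::cstar_algebra \<Rightarrow> nat \<Rightarrow> (nat \<Rightarrow> nat \<Rightarrow> 'a) \<Rightarrow> bool" where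
  "matn_unitary e n U \<longleftrightarrow>
     matn_eq n (matn_mult n (matn_adj U) U) (matn_id e) \<and>
     matn_eq n (matn_mult n U (matn_adj U)) (matn_id e)"

text \<open>U lies in the connected component of the identity of the unitary group of
M_n(B), i.e. it is joined to 1 by a continuous path of unitaries (the topology of M_n(B)
is that of entrywise convergence).\<close>
definition matn_in_U0 :: "'a::cstar_algebra \<Rightarrow> nat \<Rightarrow> (nat \<Rightarrow> nat \<Rightarrow> 'a) \<Rightarrow> bool" where
  "matn_in_U0 e n U \<longleftrightarrow>
     (\<exists>\<gamma> :: real \<Rightarrow> nat \<Rightarrow> nat \<Rightarrow> 'a.
        (\<forall>i<n. \<forall>j<n. continuous_on {0..1} (\<lambda>t. \<gamma> t i j)) \<and>
        (\<forall>t\<in>{0..1}. matn_unitary e n (\<gamma> t)) \<and>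
        matn_eq n (\<gamma> 0) U \<and> matn_eq n (\<gamma> 1) (matn_id e))"

definition diag_one :: "'a::cstar_algebra \<Rightarrow> 'a \<Rightarrow> (nat \<Rightarrow> nat \<Rightarrow> 'a)" where
  "diag_one e u = (\<lambda>i j. if i = 0 \<and> j = 0 then u else if i = j then e else 0)"

text \<open>B (unital with unit e) is K_1-injective: a unitary u whose class [u] in K_1(B)
vanishes (i.e. diag(u,1_k) is in U^0(M_{k+1}(B)) for some k) lies in U^0(B).  Since
U(B)/U^0(B) -> K_1(B) is a group homomorphism, this is injectivity of that map.\<close>
definition K1_injective :: "'a::cstar_algebra itself \<Rightarrow> bool" where
  "K1_injective _ \<longleftrightarrow> (\<exists>e::'a. is_unit_elem e \<and>
     (\<forall>u::'a. cadj u * u = e \<and> u * cadj u = e \<longrightarrow>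
        (\<exists>k. matn_in_U0 e (Suc k) (diag_one e u)) \<longrightarrow>
        matn_in_U0 e 1 (\<lambda>i j. u)))"

end

theory Submission
  imports Defs
begin

text \<open>By proper infiniteness there are isometries \<open>s\<^sub>1, s\<^sub>2 \<in> A\<^sub>1\<close> and \<open>t\<^sub>1, t\<^sub>2 \<in> A\<^sub>2\<close>
with orthogonal ranges; write \<open>x\<^sub>i = \<pi>\<^sub>1(s\<^sub>i)\<close> and \<open>y\<^sub>i = \<pi>\<^sub>2(t\<^sub>i)\<close>.  Elements of the
pull-back are produced from unitaries of \<open>A\<^sub>1\<close> whose images carry words in the \<open>x\<^sub>i\<close> to
the corresponding words in the \<open>y\<^sub>i\<close>, so the argument hinges on lifting unitaries of \<open>B\<close>.
Self-adjoint elements lift, hence so do their Cayley transforms; these include the unitaries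
within distance \<open>1\<close> of \<open>1\<close>, and therefore, walking along a path, all of \<open>U\<^sup>0(B)\<close>.

For \<open>M\<^sub>2(A)\<close>: there is always an isometry \<open>w \<in> B\<close> with \<open>w x\<^sub>i x\<^sub>j = y\<^sub>1 y\<^sub>i y\<^sub>j\<close>.  It is a
corner of a self-adjoint unitary \<open>J\<close> commuting with \<open>x\<^sub>1x\<^sub>1\<^sup>* + x\<^sub>2x\<^sub>2\<^sup>*\<close>, and \<open>J\<close> lifts to
a unitary commuting with \<open>s\<^sub>1s\<^sub>1\<^sup>* + s\<^sub>2s\<^sub>2\<^sup>*\<close>, whose corner is a column isometry
\<open>(c\<^sub>1, c\<^sub>2)\<close> over \<open>A\<^sub>1\<close> with image \<open>(w, 0)\<close>.  The matrices with columns
\<open>((c\<^sub>1 s\<^sub>m s\<^sub>l, t\<^sub>1 t\<^sub>m t\<^sub>l), (c\<^sub>2 s\<^sub>m s\<^sub>l, 0))\<close>, \<open>m = 1, 2\<close>, are orthogonal isometries of \<open>M\<^sub>2(A)\<close>.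

For \<open>A\<close>: the unitary \<open>U = W (x\<^sub>2 W\<^sup>* x\<^sub>2\<^sup>* + 1 - x\<^sub>2x\<^sub>2\<^sup>*)\<close> satisfies \<open>U x\<^sub>1 x\<^sub>i = y\<^sub>1 y\<^sub>i\<close>,
and \<open>diag(U, 1)\<close> is joined to \<open>1\<close> by a rotation path, so \<open>[U] = 0\<close> in \<open>K\<^sub>1(B)\<close>.
\<open>K\<^sub>1\<close>-injectivity puts \<open>U\<close> into \<open>U\<^sup>0(B)\<close>, so it lifts to a unitary \<open>V\<close>, and
\<open>(V s\<^sub>1 s\<^sub>i, t\<^sub>1 t\<^sub>i)\<close> are orthogonal isometries of \<open>A\<close>.\<close>

context cstar_algebra
begin

lemma cadj_zero [simp]: "cadj 0 = 0"
  using cadj_add[of 0 0] by simp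

lemma cadj_minus [simp]: "cadj (- x) = - cadj x"
  using cadj_add[of x "- x"] by (simp add: eq_neg_iff_add_eq_0 add.commute)

lemma cadj_diff [simp]: "cadj (x - y) = cadj x - cadj y"
  using cadj_add[of x "- y"] by simp

lemma cadj_scaleR [simp]: "cadj (scaleR r x) = scaleR r (cadj x)"
  by (simp add: scaleR_scaleC cadj_scaleC)

lemma norm_cadj_le: "norm x \<le> norm (cadj x)"
proof (cases "x = 0")
  case False
  have "norm x * norm x = norm (cadj x * x)" by (simp add: cstar_identity)
  also have "\<dots> \<le> norm (cadj x) * norm x" by (rule norm_mult_ineq)
  finally show ?thesis using False by simp
qed simp

lemma norm_cadj [simp]: "norm (cadj x) = norm x"
  using norm_cadj_le[of x] norm_cadj_le[of "cadj x"] by (simp add: cadj_cadj)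

lemma scaleC_zero_right [simp]: "scaleC c 0 = 0"
  using scaleC_add_right[of c 0 0] by simp

lemma scaleC_zero_left [simp]: "scaleC 0 x = 0"
  using scaleC_add_left[of 0 0 x] by simp

lemma scaleC_minus_right: "scaleC c (- x) = - scaleC c x"
  using scaleC_add_right[of c x "- x"] by (simp add: eq_neg_iff_add_eq_0 add.commute)

lemma scaleC_diff_right: "scaleC c (x - y) = scaleC c x - scaleC c y"
  using scaleC_add_right[of c x "- y"] by (simp add: scaleC_minus_right)

lemma scaleC_minus_left: "scaleC (- c) x = - scaleC c x"
  using scaleC_add_left[of c "- c" x] by (simp add: eq_neg_iff_add_eq_0 add.commute)

lemma scaleC_mult_both: "scaleC a x * scaleC b y = scaleC (a * b) (x * y)"
  by (simp add: scaleC_mult_left scaleC_mult_right scaleC_scaleC mult.commute)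

lemma cadj_scaleC_i: "cadj (scaleC \<i> x) = - scaleC \<i> (cadj x)"
  by (simp add: cadj_scaleC scaleC_minus_left)

end

lemma bounded_linear_cadj: "bounded_linear (cadj :: 'a::cstar_algebra \<Rightarrow> 'a)"
  by (rule bounded_linear_intro[where K=1]) (auto simp: cadj_add)

lemma continuous_on_cadj:
  "continuous_on S f \<Longrightarrow> continuous_on S (\<lambda>t. cadj (f t :: 'a::cstar_algebra))"
  using bounded_linear.continuous_on[OF bounded_linear_cadj] by blast

lemma is_unit_elemD:
  "is_unit_elem e \<Longrightarrow> e * x = x" "is_unit_elem e \<Longrightarrow> x * e = x"
  by (auto simp: is_unit_elem_def)

lemma is_unit_elem_one: "is_unit_elem (1::'a::unital_cstar_algebra)"
  by (simp add: is_unit_elem_def)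

lemma is_unit_elem_unique: "is_unit_elem e \<Longrightarrow> is_unit_elem e' \<Longrightarrow> e = e'"
  unfolding is_unit_elem_def by metis

lemma is_unit_elem_cadj:
  fixes e :: "'a::cstar_algebra"
  assumes e: "is_unit_elem e"
  shows "cadj e = e"
proof -
  have "is_unit_elem (cadj e)"
    unfolding is_unit_elem_def
    by (metis cadj_cadj cadj_mult e is_unit_elemD)
  thus ?thesis using e is_unit_elemD by metis
qed

lemma cadj_one [simp]: "cadj (1::'a::unital_cstar_algebra) = 1"
  by (rule is_unit_elem_cadj[OF is_unit_elem_one])

lemma is_unit_elem_norm_le:
  fixes e :: "'a::cstar_algebra"
  assumes "is_unit_elem e"
  shows "norm e \<le> 1"
proof -
  have "norm e * norm e = norm e"
    using assms cstar_identity[of e] by (simp add: is_unit_elem_cadj is_unit_elemD)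
  hence "norm e = 0 \<or> norm e = 1" by (metis mult_cancel_right1 mult_zero_left)
  thus ?thesis by auto
qed

lemma isometry_norm_le:
  fixes v e :: "'a::cstar_algebra"
  assumes "cadj v * v = e" "is_unit_elem e"
  shows "norm v \<le> 1"
proof -
  have "norm v * norm v \<le> 1"
    using assms is_unit_elem_norm_le cstar_identity[of v] by metis
  thus ?thesis
    by (metis mult_le_cancel_left1 norm_ge_zero not_less order.trans mult_le_one le_cases zero_le_one)
qed

lemma inverse_unique:
  fixes x y y' :: "'a::cstar_algebra"
  assumes "x * y = e" "y' * x = e" "is_unit_elem e"
  shows "y = y'"
proof -
  have "y = (y' * x) * y" using assms(2,3) by (simp add: is_unit_elemD)
  also have "\<dots> = y'" using assms(1,3) by (simp add: mult.assoc is_unit_elemD)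
  finally show ?thesis .
qed

lemma inverse_commute:
  fixes x y z :: "'a::cstar_algebra"
  assumes "x * y = e" "y * x = e" "is_unit_elem e" "x * z = z * x"
  shows "y * z = z * y"
proof -
  have "y * z = y * (z * x) * y" using assms(1,3) by (simp add: mult.assoc is_unit_elemD)
  also have "\<dots> = (y * x) * z * y" using assms(4) by (simp add: mult.assoc)
  also have "\<dots> = z * y" using assms(2,3) by (simp add: is_unit_elemD)
  finally show ?thesis .
qed

fun unit_power :: "'a::cstar_algebra \<Rightarrow> 'a \<Rightarrow> nat \<Rightarrow> 'a" where
  "unit_power e a 0 = e"
| "unit_power e a (Suc n) = a * unit_power e a n"

lemma unit_power_commute:
  assumes "is_unit_elem e"
  shows "unit_power e a n * a = a * unit_power e a n"
  by (induction n) (simp_all add: assms is_unit_elemD mult.assoc)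

lemma norm_unit_power_le:
  assumes "is_unit_elem e"
  shows "norm (unit_power e a n) \<le> norm a ^ n"
proof (induction n)
  case 0 thus ?case using is_unit_elem_norm_le[OF assms] by simp
next
  case (Suc n)
  have "norm (unit_power e a (Suc n)) \<le> norm a * norm (unit_power e a n)"
    by (simp add: norm_mult_ineq)
  also have "\<dots> \<le> norm a * norm a ^ n" using Suc by (simp add: mult_left_mono)
  finally show ?case by simp
qed

lemma neumann_series_inverse:
  fixes a e :: "'a::cstar_algebra"
  assumes e: "is_unit_elem e" and a: "norm a < 1"
  shows "\<exists>b. (e - a) * b = e \<and> b * (e - a) = e"
proof -
  let ?p = "unit_power e a"
  have summable: "summable ?p"
    by (rule summable_comparison_test[OF _ summable_geometric[of "norm a"]])
      (use a norm_unit_power_le[OF e] in auto)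
  have "?p \<longlonglongrightarrow> 0"
    by (rule Lim_null_comparison[OF _ LIMSEQ_power_zero[of "norm a"]])
      (use a norm_unit_power_le[OF e] in auto)
  hence telescope: "(\<Sum>n. ?p n - ?p (Suc n)) = e"
    using telescope_sums'[of ?p 0] sums_unique by fastforce
  define b where "b = suminf ?p"
  have "(e - a) * b = (\<Sum>n. (e - a) * ?p n)" unfolding b_def by (simp add: suminf_mult summable)
  also have "\<dots> = e" using e telescope by (simp add: algebra_simps is_unit_elemD)
  finally have right: "(e - a) * b = e" .
  have "b * (e - a) = (\<Sum>n. ?p n * (e - a))" unfolding b_def by (simp add: suminf_mult2 summable)
  also have "\<dots> = e" using e telescope by (simp add: algebra_simps is_unit_elemD unit_power_commute)
  finally show ?thesis using right by blast
qed

lemma norm_scaled_unit_plus_i_selfadjoint_less: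
  fixes k e :: "'a::cstar_algebra"
  assumes e: "is_unit_elem e" and k: "cadj k = k"
  defines "t \<equiv> norm k * norm k"
  shows "norm (scaleC (of_real t) e + scaleC \<i> k) < 1 + t"
proof -
  define X where "X = scaleC (of_real t) e + scaleC \<i> k"
  have t: "t \<ge> 0" unfolding t_def by simp
  have "cadj X * X = scaleC (of_real (t * t)) e + k * k"
    unfolding X_def using e k
    by (simp add: cadj_add cadj_scaleC is_unit_elem_cadj distrib_left distrib_right scaleC_mult_both
        is_unit_elemD scaleC_add_left[symmetric] algebra_simps scaleC_one)
  hence "norm (cadj X * X) \<le> norm (scaleC (of_real (t * t)) e) + norm (k * k)"
    by (metis norm_triangle_ineq)
  also have "\<dots> \<le> t * t + norm k * norm k"
    using mult_left_le[OF is_unit_elem_norm_le[OF e], of "t * t"] t norm_mult_ineq[of k k]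
    by (simp add: norm_scaleC del: of_real_mult)
  finally have "norm X * norm X \<le> t * t + t" by (simp add: cstar_identity t_def)
  hence "\<not> 1 + t \<le> norm X"
    using t mult_mono[of "1 + t" "norm X" "1 + t" "norm X"] by (auto simp: algebra_simps)
  thus ?thesis unfolding X_def by simp
qed

text \<open>With \<open>t = \<parallel>k\<parallel>\<^sup>2\<close>, \<open>e - i k = (1 + t) (e - a)\<close> where \<open>a = (t e + i k) / (1 + t)\<close> has
norm \<open>< 1\<close>.\<close>

lemma unit_minus_i_selfadjoint_invertible:
  fixes k e :: "'a::cstar_algebra"
  assumes e: "is_unit_elem e" and k: "cadj k = k"
  shows "\<exists>b. (e - scaleC \<i> k) * b = e \<and> b * (e - scaleC \<i> k) = e"
proof -
  define t where "t = norm k * norm k"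
  have t: "t \<ge> 0" unfolding t_def by simp
  have "complex_of_real (1 + t) \<noteq> 0" using t by (simp only: of_real_eq_0_iff)
  hence t1: "1 + complex_of_real t \<noteq> 0" by simp
  define a where "a = scaleC (of_real (1 / (1 + t))) (scaleC (of_real t) e + scaleC \<i> k)"
  have "norm (scaleC (of_real t) e + scaleC \<i> k) < 1 + t"
    unfolding t_def by (rule norm_scaled_unit_plus_i_selfadjoint_less[OF e k])
  hence "norm a < 1"
    unfolding a_def using t by (simp add: norm_scaleC field_simps del: of_real_divide of_real_add)
  then obtain b where b: "(e - a) * b = e" "b * (e - a) = e" using neumann_series_inverse[OF e] by blast
  have "e - scaleC \<i> k = scaleC (of_real (1 + t)) (e - a)"
    unfolding a_def using t1
    by (simp add: scaleC_diff_right scaleC_scaleC scaleC_add_left scaleC_one algebra_simps)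
  with b t1 show ?thesis
    by (intro exI[of _ "scaleC (of_real (1 / (1 + t))) b"])
      (simp add: scaleC_mult_both scaleC_one)
qed

text \<open>The Cayley transform \<open>(1 + i k)(1 - i k)\<inverse>\<close> of a self-adjoint \<open>k\<close> is unitary: both
factors commute and \<open>(1 - i k)\<^sup>* = 1 + i k\<close>.\<close>

lemma cayley_transform_unitary:
  fixes k P :: "'a::unital_cstar_algebra"
  assumes k: "cadj k = k" and kP: "k * P = P * k"
  shows "\<exists>V r. cadj V * V = 1 \<and> V * cadj V = 1 \<and> V * P = P * V \<and>
      V = (1 + scaleC \<i> k) * r \<and> (1 - scaleC \<i> k) * r = 1 \<and> r * (1 - scaleC \<i> k) = 1"
proof -
  define a where "a = 1 - scaleC \<i> k"
  define b where "b = 1 + scaleC \<i> k"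
  obtain r where r: "a * r = 1" "r * a = 1"
    using unit_minus_i_selfadjoint_invertible[OF is_unit_elem_one k] unfolding a_def by blast
  have ca: "cadj a = b" unfolding a_def b_def by (simp add: cadj_scaleC_i k)
  have rb: "b * cadj r = 1" "cadj r * b = 1" using r ca by (metis cadj_mult cadj_one)+
  have ab: "a * b = b * a" unfolding a_def b_def by (simp add: algebra_simps)
  have br: "r * b = b * r" using inverse_commute[OF r is_unit_elem_one ab] by simp
  have rr: "cadj r * r = r * cadj r" using inverse_commute[OF rb is_unit_elem_one br[symmetric]] by simp
  have aP: "a * P = P * a" and bP: "b * P = P * b"
    unfolding a_def b_def using kP by (simp_all add: algebra_simps scaleC_mult_left scaleC_mult_right)
  have rP: "r * P = P * r" using inverse_commute[OF r is_unit_elem_one aP] .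
  define V where "V = b * r"
  have cV: "cadj V = cadj r * a" unfolding V_def using ca by (metis cadj_mult cadj_cadj)
  have "cadj V * V = cadj r * (a * b) * r" using cV by (simp add: V_def mult.assoc)
  hence "cadj V * V = 1" using r rb by (simp add: ab mult.assoc[symmetric])
  moreover have "V * cadj V = b * (cadj r * r) * a" using cV by (simp add: V_def rr mult.assoc)
  hence "V * cadj V = 1" using r rb by (simp add: mult.assoc[symmetric])
  moreover have "V * P = P * V" unfolding V_def by (metis mult.assoc rP bP)
  ultimately show ?thesis using r unfolding V_def a_def b_def by blast
qed

text \<open>Conversely, a unitary \<open>w\<close> with \<open>e + w\<close> invertible is the Cayley transform of the
self-adjoint \<open>h = i (e - w)(e + w)\<inverse>\<close>, and \<open>(e - i h)\<inverse> = (e + w) / 2\<close>.\<close>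

lemma unitary_inverse_cayley_transform:
  fixes e w q :: "'a::cstar_algebra"
  assumes e: "is_unit_elem e" and w: "cadj w * w = e" "w * cadj w = e"
    and q: "(e + w) * q = e" "q * (e + w) = e"
  shows "\<exists>h. cadj h = h \<and> (e - scaleC \<i> h) * scaleR (1/2) (e + w) = e \<and>
      (e + scaleC \<i> h) * scaleR (1/2) (e + w) = w"
proof -
  note eL = is_unit_elemD(1)[OF e] and eR = is_unit_elemD(2)[OF e]
  have wq: "q * w = w * q"
    by (rule inverse_commute[OF q e]) (simp add: algebra_simps eL eR)
  have cq: "cadj q = w * q"
  proof (rule inverse_unique[OF _ _ e, symmetric])
    show "cadj (e + w) * (w * q) = e"
      using w q(1) by (simp add: cadj_add is_unit_elem_cadj[OF e] algebra_simps eL mult.assoc[symmetric])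
    show "cadj q * cadj (e + w) = e" using q(1) is_unit_elem_cadj[OF e] by (metis cadj_mult)
  qed
  define h where "h = scaleC \<i> ((e - w) * q)"
  have ih: "scaleC \<i> h = - ((e - w) * q)"
    unfolding h_def by (simp add: scaleC_scaleC scaleC_minus_left scaleC_one)
  have "cadj h = - scaleC \<i> (w * q - w * q * cadj w)"
    unfolding h_def by (simp add: cadj_scaleC_i cadj_mult is_unit_elem_cadj[OF e] cq algebra_simps eR)
  also have "w * q * cadj w = q * (w * cadj w)" by (simp add: wq[symmetric] mult.assoc)
  finally have selfadjoint: "cadj h = h"
    unfolding h_def using w by (simp add: algebra_simps eL eR scaleC_minus_right scaleC_diff_right)
  have "(e - scaleC \<i> h) * scaleR (1/2) (e + w) = ((e + w) * q + (e - w) * q) * scaleR (1/2) (e + w)"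
    unfolding ih q(1) by simp
  also have "\<dots> = q * (e + w)" by (simp add: algebra_simps eL mult_scaleR_right flip: scaleR_2)
  finally have inverse: "(e - scaleC \<i> h) * scaleR (1/2) (e + w) = e" using q(2) by simp
  have "(e + scaleC \<i> h) * scaleR (1/2) (e + w) = ((e + w) * q - (e - w) * q) * scaleR (1/2) (e + w)"
    unfolding ih q(1) by simp
  also have "\<dots> = w * (q * (e + w))" by (simp add: algebra_simps mult_scaleR_right mult.assoc flip: scaleR_2)
  finally have "(e + scaleC \<i> h) * scaleR (1/2) (e + w) = w" using q(2) eR by simp
  with selfadjoint inverse show ?thesis by blast
qed

section \<open>Lifting unitaries along a surjective *-homomorphism\<close>

locale surjective_star_hom =
  fixes \<pi> :: "'a::unital_cstar_algebra \<Rightarrow> 'b::cstar_algebra"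
  assumes star_hom: "star_hom \<pi>" and surj: "surj \<pi>"
begin

lemma add [simp]: "\<pi> (x + y) = \<pi> x + \<pi> y"
  and mult [simp]: "\<pi> (x * y) = \<pi> x * \<pi> y"
  and scaleC [simp]: "\<pi> (scaleC c x) = scaleC c (\<pi> x)"
  and cadj [simp]: "\<pi> (cadj x) = cadj (\<pi> x)"
  using star_hom by (simp_all add: star_hom_def)

lemma zero [simp]: "\<pi> 0 = 0"
  using add[of 0 0] by simp

lemma minus [simp]: "\<pi> (- x) = - \<pi> x"
  using add[of x "- x"] by (simp add: eq_neg_iff_add_eq_0 add.commute)

lemma diff [simp]: "\<pi> (x - y) = \<pi> x - \<pi> y"
  using add[of x "- y"] by simp

lemma scaleR [simp]: "\<pi> (scaleR r x) = scaleR r (\<pi> x)"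
  by (simp add: scaleR_scaleC)

lemma is_unit_elem_image_one: "is_unit_elem (\<pi> 1)"
  unfolding is_unit_elem_def by (metis surj surj_def mult mult_1_left mult_1_right)

lemma lift_selfadjoint_commuting:
  assumes h: "cadj h = h" and P: "P * P = P" "cadj P = P" and hP: "\<pi> P * h = h * \<pi> P"
  shows "\<exists>k. cadj k = k \<and> k * P = P * k \<and> \<pi> k = h"
proof -
  obtain a where a: "\<pi> a = h" using surj by (metis surj_def)
  define k0 where "k0 = scaleR (1/2) (a + cadj a)"
  have k0: "cadj k0 = k0" "\<pi> k0 = h"
    unfolding k0_def using a h by (simp_all add: cadj_add cadj_cadj add.commute flip: scaleR_2)
  define k where "k = P * k0 * P + (1 - P) * k0 * (1 - P)"
  have "cadj k = k" unfolding k_def using P k0 by (simp add: cadj_add cadj_mult mult.assoc)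
  moreover have "k * P = P * k"
  proof -
    have "(1 - P) * P = 0" "P * (1 - P) = 0" using P by (simp_all add: algebra_simps)
    hence "k * P = P * k0 * P" "P * k = P * k0 * P"
      unfolding k_def using P
      by (simp add: distrib_right mult.assoc, simp add: distrib_left mult.assoc[symmetric])
    thus ?thesis by simp
  qed
  moreover have "\<pi> k = h"
  proof -
    have "\<pi> k = \<pi> P * h * \<pi> P + (\<pi> 1 - \<pi> P) * h * (\<pi> 1 - \<pi> P)" unfolding k_def by (simp add: k0)
    also have "\<dots> = h * (\<pi> (P * P) + \<pi> ((1 - P) * (1 - P)))"
      using hP is_unit_elem_image_one by (simp add: algebra_simps mult.assoc is_unit_elemD)
    also have "\<dots> = h" using P is_unit_elem_image_one by (simp add: algebra_simps is_unit_elemD)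
    finally show ?thesis .
  qed
  ultimately show ?thesis by metis
qed

text \<open>A right inverse \<open>q\<close> of \<open>\<pi> 1 - i h\<close> is its inverse, so it is the image of the inverse
\<open>r\<close> taken in the Cayley transform of a self-adjoint lift of \<open>h\<close>.\<close>

lemma lift_cayley_transform:
  assumes h: "cadj h = h" and P: "P * P = P" "cadj P = P" and hP: "\<pi> P * h = h * \<pi> P"
    and q: "(\<pi> 1 - scaleC \<i> h) * q = \<pi> 1"
  shows "\<exists>V. cadj V * V = 1 \<and> V * cadj V = 1 \<and> V * P = P * V \<and> \<pi> V = (\<pi> 1 + scaleC \<i> h) * q"
proof -
  obtain k where k: "cadj k = k" "k * P = P * k" "\<pi> k = h"
    using lift_selfadjoint_commuting[OF h P hP] by blast
  obtain V r where V: "cadj V * V = 1" "V * cadj V = 1" "V * P = P * V"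
      "V = (1 + scaleC \<i> k) * r" "r * (1 - scaleC \<i> k) = 1"
    using cayley_transform_unitary[OF k(1,2)] by blast
  have "\<pi> r * (\<pi> 1 - scaleC \<i> h) = \<pi> 1" using V(5) k(3) by (metis diff mult scaleC)
  hence "q = \<pi> r" using inverse_unique[OF q _ is_unit_elem_image_one] by blast
  thus ?thesis using V k(3) by auto
qed

lemma lift_symmetry_commuting:
  assumes j: "cadj j = j" "j * j = \<pi> 1" and P: "P * P = P" "cadj P = P" and jP: "\<pi> P * j = j * \<pi> P"
  shows "\<exists>V. cadj V * V = 1 \<and> V * cadj V = 1 \<and> V * P = P * V \<and> \<pi> V = j"
proof -
  let ?e = "\<pi> 1"
  define q where "q = scaleR (1/2) (?e + scaleC \<i> j)"
  have "(?e - scaleC \<i> j) * (?e + scaleC \<i> j) = ?e + ?e"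
    and "(?e + scaleC \<i> j) * (?e + scaleC \<i> j) = scaleC \<i> j + scaleC \<i> j"
    using j is_unit_elem_image_one
    by (simp_all add: algebra_simps scaleC_mult_both is_unit_elemD scaleC_minus_left scaleC_one)
  hence "(?e - scaleC \<i> j) * q = ?e" "(?e + scaleC \<i> j) * q = scaleC \<i> j"
    unfolding q_def by (simp_all add: mult_scaleR_right flip: scaleR_2)
  then obtain V where V: "cadj V * V = 1" "V * cadj V = 1" "V * P = P * V" "\<pi> V = scaleC \<i> j"
    using lift_cayley_transform[OF j(1) P jP] by metis
  show ?thesis using V
    by (intro exI[of _ "scaleC (- \<i>) V"])
      (simp add: cadj_scaleC scaleC_mult_both scaleC_mult_left scaleC_mult_right scaleC_scaleC scaleC_one)
qed

lemma lift_unitary_near_one: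
  assumes w: "cadj w * w = \<pi> 1" "w * cadj w = \<pi> 1" and near: "norm (w - \<pi> 1) < 1"
  shows "\<exists>V. cadj V * V = 1 \<and> V * cadj V = 1 \<and> \<pi> V = w"
proof -
  let ?e = "\<pi> 1"
  have e: "is_unit_elem ?e" by (rule is_unit_elem_image_one)
  have "norm (scaleR (1/2) (?e - w)) < 1" using near by (simp add: norm_minus_commute)
  then obtain b where b: "(?e - scaleR (1/2) (?e - w)) * b = ?e" "b * (?e - scaleR (1/2) (?e - w)) = ?e"
    using neumann_series_inverse[OF e] by blast
  have "?e - scaleR (1/2) (?e - w) = scaleR (1/2) (?e + w)"
    by (simp add: algebra_simps flip: scaleR_2)
  hence "(?e + w) * scaleR (1/2) b = ?e" "scaleR (1/2) b * (?e + w) = ?e"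
    using b by (simp_all add: mult_scaleR_left mult_scaleR_right)
  from unitary_inverse_cayley_transform[OF e w this] obtain h where
    h: "cadj h = h" and inverse: "(?e - scaleC \<i> h) * scaleR (1/2) (?e + w) = ?e"
    and cayley: "(?e + scaleC \<i> h) * scaleR (1/2) (?e + w) = w"
    by blast
  show ?thesis
    using lift_cayley_transform[OF h _ _ _ inverse, of 1, unfolded cayley] e by (simp add: is_unit_elemD)
qed

definition has_unitary_lift :: "'b \<Rightarrow> bool" where
  "has_unitary_lift b \<longleftrightarrow> (\<exists>V. cadj V * V = 1 \<and> V * cadj V = 1 \<and> \<pi> V = b)"

lemma has_unitary_lift_one: "has_unitary_lift (\<pi> 1)"
  unfolding has_unitary_lift_def by (intro exI[of _ 1]) simp

lemma has_unitary_lift_mult: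
  assumes "has_unitary_lift b" "has_unitary_lift c"
  shows "has_unitary_lift (b * c)"
proof -
  obtain V W where V: "cadj V * V = 1" "V * cadj V = 1" "\<pi> V = b"
    and W: "cadj W * W = 1" "W * cadj W = 1" "\<pi> W = c"
    using assms unfolding has_unitary_lift_def by blast
  have "cadj (V * W) * (V * W) = cadj W * (cadj V * V) * W"
    and "(V * W) * cadj (V * W) = V * (W * cadj W) * cadj V"
    by (simp_all add: cadj_mult mult.assoc)
  thus ?thesis unfolding has_unitary_lift_def using V W by (intro exI[of _ "V * W"]) simp
qed

lemma has_unitary_lift_near:
  assumes a: "cadj a * a = \<pi> 1" "a * cadj a = \<pi> 1" "has_unitary_lift a"
    and b: "cadj b * b = \<pi> 1" "b * cadj b = \<pi> 1" and near: "norm (b - a) < 1"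
  shows "has_unitary_lift b"
proof -
  let ?e = "\<pi> 1"
  have e: "is_unit_elem ?e" by (rule is_unit_elem_image_one)
  define w where "w = cadj a * b"
  have "cadj w * w = cadj b * (a * cadj a) * b" "w * cadj w = cadj a * (b * cadj b) * a"
    unfolding w_def by (simp_all add: cadj_mult cadj_cadj mult.assoc)
  hence w: "cadj w * w = ?e" "w * cadj w = ?e" using a b e by (simp_all add: is_unit_elemD)
  have "w - ?e = cadj a * (b - a)" unfolding w_def using a by (simp add: right_diff_distrib)
  hence "norm (w - ?e) \<le> norm (cadj a) * norm (b - a)" by (metis norm_mult_ineq)
  also have "\<dots> \<le> norm (b - a)"
    using isometry_norm_le[OF _ e, of "cadj a"] a by (simp add: cadj_cadj mult_left_le_one_le)
  finally have "has_unitary_lift w"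
    using lift_unitary_near_one[OF w] near unfolding has_unitary_lift_def by simp
  hence "has_unitary_lift (a * w)" using a(3) by (rule has_unitary_lift_mult[rotated])
  moreover have "a * w = b" unfolding w_def using a e by (simp add: mult.assoc[symmetric] is_unit_elemD)
  ultimately show ?thesis by simp
qed

text \<open>By uniform continuity, the path is covered by finitely many steps of length \<open>< 1\<close>,
walking backwards from the lift \<open>1\<close> of \<open>\<gamma> 1\<close>.\<close>

lemma has_unitary_lift_path_start:
  fixes \<gamma> :: "real \<Rightarrow> 'b"
  assumes cont: "continuous_on {0..1} \<gamma>"
    and unitary: "\<And>t. t \<in> {0..1} \<Longrightarrow> cadj (\<gamma> t) * \<gamma> t = \<pi> 1 \<and> \<gamma> t * cadj (\<gamma> t) = \<pi> 1"
    and end1: "\<gamma> 1 = \<pi> 1"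
  shows "has_unitary_lift (\<gamma> 0)"
proof -
  obtain d where d: "d > 0"
    "\<And>s t. s \<in> {0..1} \<Longrightarrow> t \<in> {0..1} \<Longrightarrow> dist s t < d \<Longrightarrow> dist (\<gamma> s) (\<gamma> t) < 1"
    using compact_uniformly_continuous[OF cont] unfolding uniformly_continuous_on_def
    by (metis compact_Icc zero_less_one)
  have walk: "\<forall>t \<in> {0..1}. 1 - t \<le> real n * (d/2) \<longrightarrow> has_unitary_lift (\<gamma> t)" for n
  proof (induction n)
    case 0
    show ?case using end1 has_unitary_lift_one by auto
  next
    case (Suc n)
    show ?case
    proof (intro ballI impI)
      fix t :: real assume t: "t \<in> {0..1}" "1 - t \<le> real (Suc n) * (d/2)"
      define s where "s = min 1 (t + d/2)"
      have s: "s \<in> {0..1}" "1 - s \<le> real n * (d/2)" "dist t s < d"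
        using t d unfolding s_def by (auto simp: algebra_simps min_def dist_real_def)
      show "has_unitary_lift (\<gamma> t)"
      proof (rule has_unitary_lift_near)
        show "has_unitary_lift (\<gamma> s)" using Suc s by blast
        show "norm (\<gamma> t - \<gamma> s) < 1" using d(2)[OF t(1) s(1,3)] by (simp add: dist_norm)
      qed (use unitary s(1) t(1) in auto)
    qed
  qed
  obtain n :: nat where "2 / d \<le> real n" using real_arch_simple by blast
  hence "1 \<le> real n * (d/2)" using d by (simp add: field_simps)
  thus ?thesis using walk[of n] by auto
qed

end

locale orthogonal_isometries =
  fixes e x1 x2 :: "'a::cstar_algebra"
  assumes unit: "is_unit_elem e" and isometry1: "cadj x1 * x1 = e" and isometry2: "cadj x2 * x2 = e"
    and orthogonal: "cadj x1 * x2 = 0"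
begin

lemma unit_mult [simp]: "e * z = z" "z * e = z"
  using unit by (simp_all add: is_unit_elemD)

lemma cadj_unit [simp]: "cadj e = e"
  by (rule is_unit_elem_cadj[OF unit])

lemma orthogonal_sym: "cadj x2 * x1 = 0"
  using orthogonal by (metis cadj_mult cadj_cadj cadj_zero)

lemma cadj_isometry_mult [simp]:
  "cadj x1 * x1 = e" "cadj x2 * x2 = e" "cadj x1 * x2 = 0" "cadj x2 * x1 = 0"
  "cadj x1 * (x1 * z) = z" "cadj x2 * (x2 * z) = z" "cadj x1 * (x2 * z) = 0" "cadj x2 * (x1 * z) = 0"
  using isometry1 isometry2 orthogonal orthogonal_sym by (simp_all add: mult.assoc[symmetric])

definition defect :: 'a where
  "defect = e - x1 * cadj x1 - x2 * cadj x2"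

lemma defect_simps [simp]:
  "cadj defect = defect" "defect * x1 = 0" "defect * x2 = 0" "cadj x1 * defect = 0" "cadj x2 * defect = 0"
  "defect * (x1 * z) = 0" "defect * (x2 * z) = 0" "cadj x1 * (defect * z) = 0" "cadj x2 * (defect * z) = 0"
  unfolding defect_def by (simp_all add: cadj_mult cadj_cadj cadj_add algebra_simps mult.assoc)

lemma defect_idem [simp]: "defect * defect = defect"
  by (subst (1) defect_def) (simp add: algebra_simps mult.assoc)

definition iso :: "bool \<Rightarrow> 'a" where
  "iso b = (if b then x2 else x1)"

lemma cadj_iso_word_mult_iso_word:
  "cadj (iso m * iso l) * (iso m' * iso l') = (if m = m' \<and> l = l' then e else 0)"
  unfolding iso_def by (cases m; cases l; cases m'; cases l') (simp_all add: cadj_mult mult.assoc)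

end

lemma properly_infinite_obtain_isometries:
  assumes "properly_infinite (UNIV::'a set) (*) cadj 0 1"
  obtains s1 s2 :: "'a::unital_cstar_algebra" where "orthogonal_isometries 1 s1 s2"
proof -
  obtain e f v w :: 'a where ef: "e * f = 0" and v: "cadj v * v = e" "v * cadj v = 1"
      and w: "cadj w * w = f" "w * cadj w = 1"
    using assms unfolding properly_infinite_def mvn_equiv_def by blast
  have "v * cadj w = (v * cadj v) * v * cadj w * (w * cadj w)" using v w by simp
  also have "\<dots> = v * (cadj v * v) * (cadj w * w) * cadj w" by (simp add: mult.assoc)
  also have "\<dots> = 0" using v w ef by (simp add: mult.assoc)
  finally have "orthogonal_isometries 1 (cadj v) (cadj w)"
    using v w by unfold_locales (simp_all add: cadj_cadj is_unit_elem_one)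
  thus ?thesis by (rule that)
qed

section \<open>Unitaries of \<open>B\<close> relating two pairs of isometries\<close>

locale isometry_pairs = X: orthogonal_isometries e x1 x2 + Y: orthogonal_isometries e y1 y2
  for e x1 x2 y1 y2 :: "'b::cstar_algebra"
begin

definition "T = y1 * cadj x1 + y2 * cadj x2"

definition "W = y1 * T * cadj x1 + y2 * (X.defect + x1 * X.defect * cadj x1)
  + (Y.defect + y1 * Y.defect * cadj y1 + y2 * x1 * cadj T * cadj y1 + y2 * x2 * cadj y2) * cadj x2"

lemma W_unitary: "cadj W * W = e" "W * cadj W = e"
  unfolding W_def T_def X.defect_def Y.defect_def
  by (simp_all add: cadj_add cadj_mult cadj_cadj algebra_simps mult.assoc)

lemma W_unitary_mult [simp]: "cadj W * (W * z) = z" "W * (cadj W * z) = z"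
  using W_unitary by (simp_all add: mult.assoc[symmetric])

lemma W_maps: "W * (x1 * x1) = y1 * y1" "W * (x1 * x2) = y1 * y2"
  unfolding W_def T_def X.defect_def Y.defect_def
  by (simp_all add: cadj_add cadj_mult cadj_cadj algebra_simps mult.assoc)

text \<open>The factor \<open>Z\<close> is \<open>W\<^sup>*\<close> moved into the corner \<open>x\<^sub>2 x\<^sub>2\<^sup>*\<close>; it fixes \<open>x\<^sub>1 x\<^sub>i\<close>, and it makes
\<open>U = W Z\<close> trivial in \<open>K\<^sub>1\<close>.\<close>

definition "Z = x2 * cadj W * cadj x2 + e - x2 * cadj x2"

definition "U = W * Z"

lemma Z_unitary: "cadj Z * Z = e" "Z * cadj Z = e"
  unfolding Z_def
  by (simp_all add: cadj_add cadj_mult cadj_cadj algebra_simps mult.assoc)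

lemma Z_unitary_mult [simp]: "cadj Z * (Z * z) = z" "Z * (cadj Z * z) = z"
  using Z_unitary by (simp_all add: mult.assoc[symmetric])

lemma U_unitary: "cadj U * U = e" "U * cadj U = e"
  unfolding U_def by (simp_all add: cadj_mult mult.assoc Z_unitary W_unitary)

lemma U_maps: "U * (x1 * X.iso l) = y1 * Y.iso l"
  unfolding U_def Z_def X.iso_def Y.iso_def
  by (cases l) (simp_all add: algebra_simps mult.assoc W_maps)

definition "T2 = y1 * T * cadj x1 + y2 * T * cadj x2"

definition "w = y1 * T2 + y2 * (e - cadj T2 * T2)"

lemma w_isometry: "cadj w * w = e"
  unfolding w_def T2_def T_def
  by (simp add: cadj_add cadj_mult cadj_cadj algebra_simps mult.assoc)

lemma w_isometry_mult [simp]: "cadj w * (w * z) = z"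
  using w_isometry by (simp add: mult.assoc[symmetric])

lemma w_maps: "w * (X.iso m * X.iso l) = y1 * (Y.iso m * Y.iso l)"
  unfolding w_def T2_def T_def X.iso_def Y.iso_def
  by (cases m; cases l) (simp_all add: cadj_add cadj_mult cadj_cadj algebra_simps mult.assoc)

text \<open>The symmetry exchanging the ranges of \<open>x\<^sub>2\<close> and \<open>x\<^sub>1 w\<close> and fixing their complement.\<close>

definition "J = x1 * (e - w * cadj w) * cadj x1 + x1 * w * cadj x2 + x2 * cadj w * cadj x1 + X.defect"

lemma J_symmetry: "cadj J = J" "J * J = e"
  and J_commute: "(e - X.defect) * J = J * (e - X.defect)"
  and J_maps: "J * x2 = x1 * w"
  unfolding J_def X.defect_def
  by (simp_all add: cadj_add cadj_mult cadj_cadj algebra_simps mult.assoc)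

end

section \<open>The rotation trick in \<open>M\<^sub>2(B)\<close>\<close>

datatype 'a quad = Quad (q11: 'a) (q12: 'a) (q21: 'a) (q22: 'a)

definition qmult :: "'a::cstar_algebra quad \<Rightarrow> 'a quad \<Rightarrow> 'a quad" where
  "qmult X Y = Quad (q11 X * q11 Y + q12 X * q21 Y) (q11 X * q12 Y + q12 X * q22 Y)
                    (q21 X * q11 Y + q22 X * q21 Y) (q21 X * q12 Y + q22 X * q22 Y)"

definition qadj :: "'a::cstar_algebra quad \<Rightarrow> 'a quad" where
  "qadj X = Quad (cadj (q11 X)) (cadj (q21 X)) (cadj (q12 X)) (cadj (q22 X))"

definition qone :: "'a::cstar_algebra \<Rightarrow> 'a quad" where
  "qone e = Quad e 0 0 e"

definition qunitary :: "'a::cstar_algebra \<Rightarrow> 'a quad \<Rightarrow> bool" where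
  "qunitary e X \<longleftrightarrow> qmult (qadj X) X = qone e \<and> qmult X (qadj X) = qone e"

lemma quad_eq_iff: "X = Y \<longleftrightarrow> q11 X = q11 Y \<and> q12 X = q12 Y \<and> q21 X = q21 Y \<and> q22 X = q22 Y"
  by (cases X; cases Y) auto

lemma qmult_assoc: "qmult (qmult X Y) Z = qmult X (qmult Y Z)"
  unfolding qmult_def by (simp add: algebra_simps mult.assoc)

lemma qadj_qmult: "qadj (qmult X Y) = qmult (qadj Y) (qadj X)"
  unfolding qmult_def qadj_def by (simp add: cadj_add cadj_mult algebra_simps)

lemma qadj_qadj [simp]: "qadj (qadj X) = X"
  unfolding qadj_def by (simp add: cadj_cadj quad_eq_iff)

lemma qmult_qone: "is_unit_elem e \<Longrightarrow> qmult (qone e) X = X" "is_unit_elem e \<Longrightarrow> qmult X (qone e) = X"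
  unfolding qmult_def qone_def by (simp_all add: quad_eq_iff is_unit_elemD)

lemma qunitary_qmult:
  assumes "is_unit_elem e" "qunitary e X" "qunitary e Y"
  shows "qunitary e (qmult X Y)"
proof -
  have "qmult (qadj (qmult X Y)) (qmult X Y) = qmult (qadj Y) (qmult (qmult (qadj X) X) Y)"
    and "qmult (qmult X Y) (qadj (qmult X Y)) = qmult X (qmult (qmult Y (qadj Y)) (qadj X))"
    by (simp_all add: qadj_qmult qmult_assoc)
  thus ?thesis using assms unfolding qunitary_def by (simp add: qmult_qone)
qed

lemma qunitary_qadj: "qunitary e X \<Longrightarrow> qunitary e (qadj X)"
  unfolding qunitary_def by simp

definition qcontinuous :: "(real \<Rightarrow> 'a::real_normed_vector quad) \<Rightarrow> bool" where
  "qcontinuous F \<longleftrightarrow> continuous_on {0..1} (\<lambda>t. q11 (F t)) \<and> continuous_on {0..1} (\<lambda>t. q12 (F t)) \<and>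
     continuous_on {0..1} (\<lambda>t. q21 (F t)) \<and> continuous_on {0..1} (\<lambda>t. q22 (F t))"

lemma qcontinuous_const: "qcontinuous (\<lambda>t. X)"
  unfolding qcontinuous_def by simp

lemma qcontinuous_qmult: "qcontinuous F \<Longrightarrow> qcontinuous G \<Longrightarrow> qcontinuous (\<lambda>t. qmult (F t) (G t))"
  unfolding qcontinuous_def qmult_def by (simp add: continuous_on_add continuous_on_mult)

lemma qcontinuous_qadj: "qcontinuous F \<Longrightarrow> qcontinuous (\<lambda>t. qadj (F t))"
  unfolding qcontinuous_def qadj_def by (simp add: continuous_on_cadj)

definition quad_to_matn :: "'a quad \<Rightarrow> nat \<Rightarrow> nat \<Rightarrow> 'a" where
  "quad_to_matn X = (\<lambda>i j. if i = 0 then (if j = 0 then q11 X else q12 X)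
                           else (if j = 0 then q21 X else q22 X))"

lemma matn_mult_quad_to_matn: "matn_mult 2 (quad_to_matn X) (quad_to_matn Y) = quad_to_matn (qmult X Y)"
  unfolding matn_mult_def quad_to_matn_def qmult_def by (auto simp: fun_eq_iff numeral_2_eq_2 lessThan_Suc)

lemma matn_adj_quad_to_matn: "matn_adj (quad_to_matn X) = quad_to_matn (qadj X)"
  unfolding matn_adj_def quad_to_matn_def qadj_def by (auto simp: fun_eq_iff)

lemma matn_eq_quad_to_matn_id: "matn_eq 2 (quad_to_matn X) (matn_id e) \<longleftrightarrow> X = qone e"
  unfolding matn_eq_def quad_to_matn_def matn_id_def qone_def quad_eq_iff
  by (auto simp: numeral_2_eq_2 less_Suc_eq)

lemma matn_eq_quad_to_matn_diag_one: "matn_eq 2 (quad_to_matn X) (diag_one e u) \<longleftrightarrow> X = Quad u 0 0 e"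
  unfolding matn_eq_def quad_to_matn_def diag_one_def quad_eq_iff
  by (auto simp: numeral_2_eq_2 less_Suc_eq)

lemma matn_unitary_quad_to_matn: "matn_unitary e 2 (quad_to_matn X) \<longleftrightarrow> qunitary e X"
  unfolding matn_unitary_def qunitary_def matn_adj_quad_to_matn matn_mult_quad_to_matn
    matn_eq_quad_to_matn_id by simp

lemma matn_in_U0_quad_path:
  assumes "qcontinuous \<gamma>" "\<And>t. qunitary e (\<gamma> t)" "\<gamma> 0 = Quad u 0 0 e" "\<gamma> 1 = qone e"
  shows "matn_in_U0 e 2 (diag_one e u)"
  unfolding matn_in_U0_def
proof (intro exI[of _ "\<lambda>t. quad_to_matn (\<gamma> t)"] conjI)
  show "\<forall>i<2. \<forall>j<2. continuous_on {0..1} (\<lambda>t. quad_to_matn (\<gamma> t) i j)"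
    using assms(1) unfolding qcontinuous_def quad_to_matn_def by (auto simp: numeral_2_eq_2 less_Suc_eq)
qed (simp_all add: assms matn_unitary_quad_to_matn matn_eq_quad_to_matn_id matn_eq_quad_to_matn_diag_one)

definition rotation :: "'a::cstar_algebra \<Rightarrow> real \<Rightarrow> real \<Rightarrow> 'a \<Rightarrow> 'a quad" where
  "rotation e c s v =
     Quad (e - v * cadj v + scaleR c (v * cadj v)) (- scaleR s v) (scaleR s (cadj v)) (scaleR c e)"

lemma rotation_unitary:
  fixes v e :: "'a::cstar_algebra"
  assumes e: "is_unit_elem e" and v: "cadj v * v = e" and cs: "c * c + s * s = 1"
  shows "qunitary e (rotation e c s v)"
proof -
  note eL = is_unit_elemD(1)[OF e] and eR = is_unit_elemD(2)[OF e]
  have vv: "cadj v * (v * z) = z" for z using v eL by (simp add: mult.assoc[symmetric])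
  have ss: "scaleR (s * s) z = z - scaleR (c * c) z" for z :: 'a
    using cs by (metis add_diff_cancel_left' scaleR_left.diff scaleR_one)
  show ?thesis
    unfolding qunitary_def rotation_def qmult_def qadj_def qone_def
    by (simp add: cadj_add cadj_mult cadj_cadj is_unit_elem_cadj[OF e] eL eR v vv algebra_simps
        mult.assoc ss)
qed

lemma qcontinuous_rotation:
  "continuous_on {0..1} c \<Longrightarrow> continuous_on {0..1} s \<Longrightarrow> qcontinuous (\<lambda>t. rotation e (c t) (s t) v)"
  unfolding qcontinuous_def rotation_def
  by (simp add: continuous_on_add continuous_on_diff continuous_on_scaleR continuous_on_minus)

context isometry_pairs
begin

definition "G t = qmult (rotation e (cos ((1 - t) * (pi / 2))) (sin ((1 - t) * (pi / 2))) x2)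
                          (rotation e (cos ((1 - t) * (pi / 2))) (sin ((1 - t) * (pi / 2))) e)"

text \<open>\<open>G 1 = 1\<close>, while \<open>G 0\<close> conjugates \<open>diag(W\<^sup>*, e)\<close> into \<open>diag(Z, e)\<close>; so the path runs
from \<open>diag(W, e) diag(Z, e) = diag(U, e)\<close> to \<open>diag(W, e) diag(W\<^sup>*, e) = 1\<close>.\<close>

definition "rotation_path t = qmult (qmult (qmult (Quad W 0 0 e) (G t)) (qadj (Quad W 0 0 e))) (qadj (G t))"

lemma G_unitary: "qunitary e (G t)"
  unfolding G_def
  by (rule qunitary_qmult[OF X.unit]; rule rotation_unitary[OF X.unit])
    (simp_all add: power2_eq_square[symmetric])

lemma rotation_path_unitary: "qunitary e (rotation_path t)"
proof -
  have "qunitary e (Quad W 0 0 e)"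
    unfolding qunitary_def qmult_def qadj_def qone_def using W_unitary by simp
  thus ?thesis
    unfolding rotation_path_def by (intro qunitary_qmult[OF X.unit] qunitary_qadj G_unitary)
qed

lemma rotation_path_0: "rotation_path 0 = Quad U 0 0 e"
  unfolding rotation_path_def G_def rotation_def qmult_def qadj_def U_def Z_def
  by (simp add: cadj_add cadj_mult cadj_cadj algebra_simps mult.assoc quad_eq_iff)

lemma rotation_path_1: "rotation_path 1 = qone e"
  unfolding rotation_path_def G_def rotation_def qmult_def qadj_def qone_def
  using W_unitary by (simp add: quad_eq_iff)

lemma qcontinuous_rotation_path: "qcontinuous rotation_path"
  unfolding rotation_path_def G_def
  by (intro qcontinuous_qmult qcontinuous_qadj qcontinuous_const qcontinuous_rotation continuous_intros)

lemma diag_one_U_in_U0: "matn_in_U0 e 2 (diag_one e U)"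
  by (rule matn_in_U0_quad_path[OF qcontinuous_rotation_path rotation_path_unitary
        rotation_path_0 rotation_path_1])

end

section \<open>The pull-back\<close>

lemma properly_infinite_if_orthogonal_isometries:
  assumes assoc: "\<And>a b c. m (m a b) c = m a (m b c)"
    and ad_m: "\<And>a b. ad (m a b) = m (ad b) (ad a)" and ad_ad: "\<And>a. ad (ad a) = a"
    and unit: "\<And>a. m u a = a" "\<And>a. m a u = a"
    and zero: "\<And>a. m z a = z" "\<And>a. m a z = z"
    and closed: "\<And>a b. a \<in> S \<Longrightarrow> b \<in> S \<Longrightarrow> m a b \<in> S" "\<And>a. a \<in> S \<Longrightarrow> ad a \<in> S"
    and V: "V \<in> S" "V' \<in> S" "m (ad V) V = u" "m (ad V') V' = u" "m (ad V) V' = z"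
  shows "properly_infinite S m ad z u"
proof -
  define E where "E = m V (ad V)"
  define F where "F = m V' (ad V')"
  have "is_proj m ad E" "is_proj m ad F" unfolding is_proj_def E_def F_def
    by (simp_all add: assoc ad_m ad_ad) (metis assoc V(3) unit(2), metis assoc V(4) unit(2))
  moreover have "m E F = z" unfolding E_def F_def by (metis assoc V(5) zero)
  moreover have "mvn_equiv S m ad E u"
    unfolding mvn_equiv_def E_def using V by (intro bexI[of _ "ad V"]) (auto simp: ad_ad closed)
  moreover have "mvn_equiv S m ad F u"
    unfolding mvn_equiv_def F_def using V by (intro bexI[of _ "ad V'"]) (auto simp: ad_ad closed)
  moreover have "E \<in> S" "F \<in> S" unfolding E_def F_def using V by (auto intro: closed)
  ultimately show ?thesis unfolding properly_infinite_def by blast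
qed

lemma pullback_ops_laws:
  fixes a b c :: "'a1::unital_cstar_algebra \<times> 'a2::unital_cstar_algebra"
  shows "pmult (pmult a b) c = pmult a (pmult b c)"
    "padj (pmult a b) = pmult (padj b) (padj a)" "padj (padj a) = a"
    "pmult (1, 1) a = a" "pmult a (1, 1) = a" "pmult (0, 0) a = (0, 0)" "pmult a (0, 0) = (0, 0)"
  by (simp_all add: pmult_def padj_def mult.assoc cadj_mult cadj_cadj)

lemma mat2_ops_laws:
  fixes M N K :: "bool \<Rightarrow> bool \<Rightarrow> ('a1::unital_cstar_algebra \<times> 'a2::unital_cstar_algebra)"
  shows "mat2_mult padd pmult (mat2_mult padd pmult M N) K = mat2_mult padd pmult M (mat2_mult padd pmult N K)"
    "mat2_adj padj (mat2_mult padd pmult M N) = mat2_mult padd pmult (mat2_adj padj N) (mat2_adj padj M)"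
    "mat2_adj padj (mat2_adj padj M) = M"
    "mat2_mult padd pmult (mat2_one (0, 0) (1, 1)) M = M" "mat2_mult padd pmult M (mat2_one (0, 0) (1, 1)) = M"
    "mat2_mult padd pmult (mat2_const (0, 0)) M = mat2_const (0, 0)"
    "mat2_mult padd pmult M (mat2_const (0, 0)) = mat2_const (0, 0)"
  by (auto simp: fun_eq_iff mat2_mult_def mat2_adj_def mat2_one_def mat2_const_def padd_def pmult_def
      padj_def algebra_simps mult.assoc cadj_mult cadj_add cadj_cadj)

lemma pullback_closed:
  assumes "star_hom \<pi>1" "star_hom \<pi>2"
  shows "a \<in> pullback \<pi>1 \<pi>2 \<Longrightarrow> b \<in> pullback \<pi>1 \<pi>2 \<Longrightarrow> pmult a b \<in> pullback \<pi>1 \<pi>2"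
    "a \<in> pullback \<pi>1 \<pi>2 \<Longrightarrow> b \<in> pullback \<pi>1 \<pi>2 \<Longrightarrow> padd a b \<in> pullback \<pi>1 \<pi>2"
    "a \<in> pullback \<pi>1 \<pi>2 \<Longrightarrow> padj a \<in> pullback \<pi>1 \<pi>2"
  using assms unfolding pullback_def pmult_def padd_def padj_def star_hom_def by auto

lemma mat2_pullback_closed:
  assumes "star_hom \<pi>1" "star_hom \<pi>2"
  shows "M \<in> mat2_carrier (pullback \<pi>1 \<pi>2) \<Longrightarrow> N \<in> mat2_carrier (pullback \<pi>1 \<pi>2) \<Longrightarrow>
      mat2_mult padd pmult M N \<in> mat2_carrier (pullback \<pi>1 \<pi>2)"
    "M \<in> mat2_carrier (pullback \<pi>1 \<pi>2) \<Longrightarrow> mat2_adj padj M \<in> mat2_carrier (pullback \<pi>1 \<pi>2)"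
  unfolding mat2_carrier_def mat2_mult_def mat2_adj_def by (auto intro!: pullback_closed[OF assms])

locale properly_infinite_pullback =
  \<pi>1: surjective_star_hom \<pi>1 + \<pi>2: surjective_star_hom \<pi>2 +
  S: orthogonal_isometries 1 s1 s2 + T: orthogonal_isometries 1 t1 t2
  for \<pi>1 :: "'a1::unital_cstar_algebra \<Rightarrow> 'b::cstar_algebra" and \<pi>2 :: "'a2::unital_cstar_algebra \<Rightarrow> 'b"
    and s1 s2 :: 'a1 and t1 t2 :: 'a2
begin

lemma \<pi>2_one: "\<pi>2 1 = \<pi>1 1"
  by (rule is_unit_elem_unique[OF \<pi>2.is_unit_elem_image_one \<pi>1.is_unit_elem_image_one])

sublocale B: isometry_pairs "\<pi>1 1" "\<pi>1 s1" "\<pi>1 s2" "\<pi>2 t1" "\<pi>2 t2"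
  by unfold_locales
    (simp_all add: \<pi>1.is_unit_elem_image_one \<pi>2_one flip: \<pi>1.mult \<pi>2.mult \<pi>1.cadj \<pi>2.cadj)

lemma image_iso: "\<pi>1 (S.iso l) = B.X.iso l" "\<pi>2 (T.iso l) = B.Y.iso l"
  unfolding S.iso_def T.iso_def B.X.iso_def B.Y.iso_def by simp_all

text \<open>Lifting the symmetry \<open>J\<close> to a unitary \<open>V\<close> commuting with \<open>P = s\<^sub>1s\<^sub>1\<^sup>* + s\<^sub>2s\<^sub>2\<^sup>*\<close>,
the column \<open>(s\<^sub>1\<^sup>* V s\<^sub>2, s\<^sub>2\<^sup>* V s\<^sub>2)\<close> of \<open>V\<close> is an isometry, since \<open>V s\<^sub>2 = V P s\<^sub>2 = P V s\<^sub>2\<close>.\<close>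

lemma column_isometry_lift:
  obtains c1 c2 where "cadj c1 * c1 + cadj c2 * c2 = 1" "\<pi>1 c1 = B.w" "\<pi>1 c2 = 0"
proof -
  define P where "P = 1 - S.defect"
  have P: "P * P = P" "cadj P = P" unfolding P_def by (simp_all add: algebra_simps)
  have "\<pi>1 P * B.J = B.J * \<pi>1 P"
    using B.J_commute unfolding P_def S.defect_def B.X.defect_def by simp
  then obtain V where V: "cadj V * V = 1" "V * P = P * V" "\<pi>1 V = B.J"
    using \<pi>1.lift_symmetry_commuting[OF B.J_symmetry P] by blast
  define c1 where "c1 = cadj s1 * V * s2"
  define c2 where "c2 = cadj s2 * V * s2"
  have "cadj c1 * c1 + cadj c2 * c2 = cadj s2 * cadj V * (P * (V * s2))"
    unfolding c1_def c2_def P_def S.defect_def by (simp add: cadj_mult cadj_cadj algebra_simps mult.assoc)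
  also have "P * (V * s2) = V * s2"
    using V(2) unfolding P_def by (simp add: algebra_simps mult.assoc[symmetric])
  also have "cadj s2 * cadj V * (V * s2) = cadj s2 * (cadj V * V) * s2" by (simp add: mult.assoc)
  finally have "cadj c1 * c1 + cadj c2 * c2 = 1" using V(1) by simp
  moreover have "\<pi>1 c1 = B.w" "\<pi>1 c2 = 0"
    unfolding c1_def c2_def using B.J_maps V(3) by (simp_all add: mult.assoc)
  ultimately show ?thesis by (rule that)
qed

lemma mat2_pullback_properly_infinite:
  "properly_infinite (mat2_carrier (pullback \<pi>1 \<pi>2))
     (mat2_mult padd pmult) (mat2_adj padj) (mat2_const (0, 0)) (mat2_one (0, 0) (1, 1))"
proof -
  obtain c1 c2 where c: "cadj c1 * c1 + cadj c2 * c2 = 1" "\<pi>1 c1 = B.w" "\<pi>1 c2 = 0"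
    by (rule column_isometry_lift)
  have column: "cadj (c1 * a) * (c1 * b) + cadj (c2 * a) * (c2 * b) = cadj a * b" for a b
  proof -
    have "cadj (c1 * a) * (c1 * b) + cadj (c2 * a) * (c2 * b) = cadj a * (cadj c1 * c1 + cadj c2 * c2) * b"
      by (simp add: cadj_mult algebra_simps mult.assoc)
    thus ?thesis using c(1) by simp
  qed
  have t1: "cadj (t1 * a) * (t1 * b) = cadj a * b" for a b
    by (simp add: cadj_mult mult.assoc)
  define V where "V m = (\<lambda>i l. if i then (c2 * (S.iso m * S.iso l), 0)
                                 else (c1 * (S.iso m * S.iso l), t1 * (T.iso m * T.iso l)))" for m
  have "V m \<in> mat2_carrier (pullback \<pi>1 \<pi>2)" for m
    unfolding mat2_carrier_def pullback_def V_def using c(2,3) B.w_maps by (simp add: image_iso)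
  moreover have "mat2_mult padd pmult (mat2_adj padj (V m)) (V m') =
      (if m = m' then mat2_one (0, 0) (1, 1) else mat2_const (0, 0))" for m m'
    by (auto simp: fun_eq_iff V_def mat2_mult_def mat2_adj_def padd_def pmult_def padj_def column t1
        S.cadj_iso_word_mult_iso_word T.cadj_iso_word_mult_iso_word mat2_one_def mat2_const_def)
  ultimately show ?thesis
    by (intro properly_infinite_if_orthogonal_isometries[where V="V False" and V'="V True"])
      (simp_all add: mat2_ops_laws mat2_pullback_closed[OF \<pi>1.star_hom \<pi>2.star_hom])
qed

lemma U_has_unitary_lift:
  assumes "K1_injective TYPE('b)"
  shows "\<pi>1.has_unitary_lift B.U"
proof -
  obtain e :: 'b where e: "is_unit_elem e" and K1:
      "\<And>u. cadj u * u = e \<and> u * cadj u = e \<longrightarrow> (\<exists>k. matn_in_U0 e (Suc k) (diag_one e u)) \<longrightarrow>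
        matn_in_U0 e 1 (\<lambda>i j. u)"
    using assms unfolding K1_injective_def by blast
  have "e = \<pi>1 1" using is_unit_elem_unique[OF e \<pi>1.is_unit_elem_image_one] .
  then have "matn_in_U0 (\<pi>1 1) 1 (\<lambda>i j. B.U)"
    using K1[of B.U] B.U_unitary B.diag_one_U_in_U0 by (metis Suc_1)
  then obtain \<gamma> :: "real \<Rightarrow> nat \<Rightarrow> nat \<Rightarrow> 'b" where \<gamma>:
      "continuous_on {0..1} (\<lambda>t. \<gamma> t 0 0)" "\<forall>t\<in>{0..1}. matn_unitary (\<pi>1 1) 1 (\<gamma> t)"
      "matn_eq 1 (\<gamma> 0) (\<lambda>i j. B.U)" "matn_eq 1 (\<gamma> 1) (matn_id (\<pi>1 1))"
    unfolding matn_in_U0_def by auto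
  have "\<pi>1.has_unitary_lift (\<gamma> 0 0 0)"
  proof (rule \<pi>1.has_unitary_lift_path_start[OF \<gamma>(1)])
    show "cadj (\<gamma> t 0 0) * \<gamma> t 0 0 = \<pi>1 1 \<and> \<gamma> t 0 0 * cadj (\<gamma> t 0 0) = \<pi>1 1" if "t \<in> {0..1}" for t
      using \<gamma>(2) that unfolding matn_unitary_def matn_eq_def matn_mult_def matn_adj_def matn_id_def by simp
    show "\<gamma> 1 0 0 = \<pi>1 1" using \<gamma>(4) unfolding matn_eq_def matn_id_def by auto
  qed
  moreover have "\<gamma> 0 0 0 = B.U" using \<gamma>(3) by (simp add: matn_eq_def)
  ultimately show ?thesis by simp
qed

lemma pullback_properly_infinite_if_K1_injective:
  assumes "K1_injective TYPE('b)"
  shows "properly_infinite (pullback \<pi>1 \<pi>2) pmult padj (0, 0) (1, 1)"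
proof -
  obtain V where V: "cadj V * V = 1" "\<pi>1 V = B.U"
    using U_has_unitary_lift[OF assms] unfolding \<pi>1.has_unitary_lift_def by blast
  define Z where "Z l = (V * (s1 * S.iso l), t1 * T.iso l)" for l
  have "Z l \<in> pullback \<pi>1 \<pi>2" for l
    unfolding pullback_def Z_def using B.U_maps V(2) by (simp add: mult.assoc image_iso)
  moreover have "pmult (padj (Z l)) (Z l') = (if l = l' then (1, 1) else (0, 0))" for l l'
    using V(1) S.cadj_iso_word_mult_iso_word[of False l False l'] T.cadj_iso_word_mult_iso_word[of False l False l']
    unfolding Z_def pmult_def padj_def S.iso_def T.iso_def
    by (simp add: cadj_mult mult.assoc flip: mult.assoc[of "cadj V"])
  ultimately show ?thesis
    by (intro properly_infinite_if_orthogonal_isometries[where V="Z False" and V'="Z True"])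
      (simp_all add: pullback_ops_laws pullback_closed[OF \<pi>1.star_hom \<pi>2.star_hom])
qed

end

theorem proposition2p7:
  fixes \<pi>1 :: "'a1::unital_cstar_algebra \<Rightarrow> 'b::cstar_algebra"
    and \<pi>2 :: "'a2::unital_cstar_algebra \<Rightarrow> 'b"
  assumes "properly_infinite (UNIV::'a1 set) (*) cadj 0 1"
    and "properly_infinite (UNIV::'a2 set) (*) cadj 0 1"
    and "star_hom \<pi>1" and "surj \<pi>1"
    and "star_hom \<pi>2" and "surj \<pi>2"
  shows "properly_infinite (mat2_carrier (pullback \<pi>1 \<pi>2))
           (mat2_mult padd pmult) (mat2_adj padj) (mat2_const (0, 0)) (mat2_one (0, 0) (1, 1))
         \<and> (K1_injective TYPE('b) \<longrightarrow>
              properly_infinite (pullback \<pi>1 \<pi>2) pmult padj (0, 0) (1, 1))"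
proof -
  obtain s1 s2 :: 'a1 where "orthogonal_isometries 1 s1 s2"
    using properly_infinite_obtain_isometries[OF assms(1)] .
  moreover obtain t1 t2 :: 'a2 where "orthogonal_isometries 1 t1 t2"
    using properly_infinite_obtain_isometries[OF assms(2)] .
  ultimately interpret properly_infinite_pullback \<pi>1 \<pi>2 s1 s2 t1 t2
    using assms(3-6) by (intro_locales; simp add: surjective_star_hom_def orthogonal_isometries_def)
  show ?thesis
    using mat2_pullback_properly_infinite pullback_properly_infinite_if_K1_injective by blast
qed

end
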